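(* Let $s\in(0,1)$ and suppose the jump kernels $j_1^{(n)}$ satisfy the upper bound with this $s$. Then for every $u\in\operatorname{Lip}([0,1])$, $\widetilde{\mathcal{E}}_1^{(\infty)}(u)=\mathcal{E}_1^{(\infty)}(u)$.
   Context: Index graph: vertices $\mathbb{N}$; vertex $i$ has edges $e_{i,2i-2}$ to $2i-2$ (only if $i\ge2$), $e_{i,2i-1},e'_{i,2i-1}$ to $2i-1$, $e_{i,2i}$ to $2i$, weights $r_e>0$ with $r_{e_{i,2i-1}}=r_{e'_{i,2i-1}}$. For $e$ from $i$ to $j$, $\phi_e(x)=\frac{j}{2i}x+s_e$, $s_e=0$ for $e\in\{e_{i,2i-1},e_{i,2i}\}$, $s_e=\frac1{2i}$ for $e\in\{e_{i,2i-2},e'_{i,2i-1}\}$. $E_1^{(n)}$: paths $\sigma=e_1\cdots e_n$ of length $n$ from vertex $1$; $\phi_\sigma=\phi_{e_1}\circ\cdots\circ\phi_{e_n}$, $\delta_\sigma=r_{e_1}\cdots r_{e_n}$. $V_1^{(n)}=\{k/2^n\}_{k=0}^{2^n}$; the wires $\{\phi_\sigma(0),\phi_\sigma(1)\}$, $\sigma\in E_1^{(n)}$, are all pairs of distinct points of $V_1^{(n)}$, each with a unique path $\sigma^{(n)}_{x,y}$. $U_1^{(n)}(x)=[x-2^{-n-1},x+2^{-n-1})\cap[0,1]$, $\mu_1^{(n)}(x)=|U_1^{(n)}(x)|$. Kernel $j_1^{(n)}(x,y)=(\delta_{\sigma^{(n)}_{x,y}}\mu_1^{(n)}(x)\mu_1^{(n)}(y))^{-1}$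 for $x\ne y$, $0$ for $x=y$. $\mathcal{E}_1^{(n)}(u)=\sum_{x,y\in V_1^{(n)}}(u(x)-u(y))^2j_1^{(n)}(x,y)\mu_1^{(n)}(x)\mu_1^{(n)}(y)$. Upper bound: there is $\Lambda_1>0$ with $0<j_1^{(n)}(x,y)\le\Lambda_1|x-y|^{-1-2s}$ for all $n\ge0$ and distinct $x,y\in V_1^{(n)}$. $\mathcal{E}_1^{(\infty)}(u)=\lim_n\mathcal{E}_1^{(n)}(u|_{V_1^{(n)}})$; $\operatorname{Avg}_1^{(n)}u(\bar x)=\frac1{|U_1^{(n)}(\bar x)|}\int_{U_1^{(n)}(\bar x)}u\,dx$; $\widetilde{\mathcal{E}}_1^{(\infty)}(u)=\lim_n\mathcal{E}_1^{(n)}(\operatorname{Avg}_1^{(n)}u)$. *)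

theory Defs
  imports "HOL-Analysis.Analysis"
begin

text \<open>Edges out of vertex i are labelled by k :: nat with k \<le> 3:
  k = 0: e_{i,2i-2} (only if i \<ge> 2);  k = 1: e_{i,2i-1};  k = 2: e'_{i,2i-1};  k = 3: e_{i,2i}.\<close>

definition edge_ok :: "nat \<Rightarrow> nat \<Rightarrow> bool" where
  "edge_ok i k \<longleftrightarrow> k \<le> 3 \<and> (k = 0 \<longrightarrow> i \<ge> 2)"

definition tgt :: "nat \<Rightarrow> nat \<Rightarrow> nat" where
  "tgt i k = (if k = 0 then 2*i - 2 else if k = 3 then 2*i else 2*i - 1)"

definition shift :: "nat \<Rightarrow> nat \<Rightarrow> real" where
  "shift i k = (if k = 0 \<or> k = 2 then 1 / (2 * real i) else 0)"

definition phi_e :: "nat \<Rightarrow> nat \<Rightarrow> real \<Rightarrow> real" where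
  "phi_e i k x = real (tgt i k) / (2 * real i) * x + shift i k"

fun valid_path :: "nat \<Rightarrow> nat list \<Rightarrow> bool" where
  "valid_path i [] = True"
| "valid_path i (k # ks) = (edge_ok i k \<and> valid_path (tgt i k) ks)"

fun phi_path :: "nat \<Rightarrow> nat list \<Rightarrow> real \<Rightarrow> real" where
  "phi_path i [] x = x"
| "phi_path i (k # ks) x = phi_e i k (phi_path (tgt i k) ks x)"

fun delta :: "(nat \<Rightarrow> nat \<Rightarrow> real) \<Rightarrow> nat \<Rightarrow> nat list \<Rightarrow> real" where
  "delta r i [] = 1"
| "delta r i (k # ks) = r i k * delta r (tgt i k) ks"

definition paths1 :: "nat \<Rightarrow> nat list set" where
  "paths1 n = {ks. length ks = n \<and> valid_path 1 ks}"

definition V1 :: "nat \<Rightarrow> real set" where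
  "V1 n = (\<lambda>k. real k / 2 ^ n) ` {0..2 ^ n}"

definition sigma1 :: "nat \<Rightarrow> real \<Rightarrow> real \<Rightarrow> nat list" where
  "sigma1 n x y = (THE \<sigma>. \<sigma> \<in> paths1 n \<and> {phi_path 1 \<sigma> 0, phi_path 1 \<sigma> 1} = {x, y})"

definition U1 :: "nat \<Rightarrow> real \<Rightarrow> real set" where
  "U1 n x = {x - 1 / 2 ^ (n+1) ..< x + 1 / 2 ^ (n+1)} \<inter> {0..1}"

definition mu1 :: "nat \<Rightarrow> real \<Rightarrow> real" where
  "mu1 n x = measure lborel (U1 n x)"

definition j1 :: "(nat \<Rightarrow> nat \<Rightarrow> real) \<Rightarrow> nat \<Rightarrow> real \<Rightarrow> real \<Rightarrow> real" where
  "j1 r n x y = (if x = y then 0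
      else 1 / (delta r 1 (sigma1 n x y) * mu1 n x * mu1 n y))"

definition energy1 :: "(nat \<Rightarrow> nat \<Rightarrow> real) \<Rightarrow> nat \<Rightarrow> (real \<Rightarrow> real) \<Rightarrow> real" where
  "energy1 r n u = (\<Sum>x\<in>V1 n. \<Sum>y\<in>V1 n. (u x - u y)^2 * j1 r n x y * mu1 n x * mu1 n y)"

definition avg1 :: "nat \<Rightarrow> (real \<Rightarrow> real) \<Rightarrow> real \<Rightarrow> real" where
  "avg1 n u x = integral (U1 n x) u / measure lborel (U1 n x)"

end

theory Submission
  imports Defs
begin

text \<open>Averaging over the cell \<open>U1 n x\<close> moves an \<open>L\<close>-Lipschitz \<open>u\<close> by at most \<open>L 2^{-n-1}\<close>.
  Writing \<open>a = u x - u y\<close> and \<open>b\<close> for the averaged difference, \<open>|b\<^sup>2 - a\<^sup>2| = |b - a| |b + a|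
  \<le> 3 L\<^sup>2 |x - y| 2^{-n}\<close>, so with the kernel bound and \<open>mu1 \<le> 2^{-n}\<close> each pair term of the two
  energies differs by \<open>O(2^{-3n} |x - y|^{-2s}) \<le> O(2^{-3n} |x - y|^{-1-s})\<close>. For grid points at
  distance \<open>k 2^{-n}\<close> this is \<open>O(2^{(s-2)n} k^{-1-s})\<close>; summing over the \<open>2^n + 1\<close> rows, each of
  which is bounded by twice the convergent series \<open>\<Sum> k^{-1-s}\<close>, gives \<open>O(2^{(s-1)n}) \<rightarrow> 0\<close>.\<close>

definition energy1_term :: "(nat \<Rightarrow> nat \<Rightarrow> real) \<Rightarrow> nat \<Rightarrow> (real \<Rightarrow> real) \<Rightarrow> real \<Rightarrow> real \<Rightarrow> real" where
  "energy1_term r n w x y = (w x - w y)^2 * j1 r n x y * mu1 n x * mu1 n y"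

lemma U1_subset_unit_interval: "U1 n x \<subseteq> {0..1}"
  unfolding U1_def by auto

lemma U1_subset_closed_interval: "U1 n x \<subseteq> {x - 1/2^(n+1) .. x + 1/2^(n+1)}"
  unfolding U1_def by auto

lemma sets_lborel_U1: "U1 n x \<in> sets lborel"
  unfolding U1_def by auto

lemma fmeasurable_U1: "U1 n x \<in> fmeasurable lborel"
  by (rule fmeasurableI2[OF _ U1_subset_closed_interval sets_lborel_U1])
    (metis cbox_interval fmeasurable_cbox)

lemma lmeasurable_U1: "U1 n x \<in> lmeasurable"
  using fmeasurable_U1 by (simp add: fmeasurable_def emeasure_completion)

lemma mu1_nonneg: "0 \<le> mu1 n x"
  unfolding mu1_def by simp

lemma mu1_le: "mu1 n x \<le> 1 / 2^n"
proof -
  have "mu1 n x \<le> measure lborel {x - 1/2^(n+1) .. x + 1/2^(n+1)}"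
    unfolding mu1_def
    by (rule measure_mono_fmeasurable[OF U1_subset_closed_interval sets_lborel_U1])
      (metis cbox_interval fmeasurable_cbox)
  also have "\<dots> = 1 / 2^n"
    by (simp add: measure_def)
  finally show ?thesis .
qed

lemma mu1_pos:
  assumes "x \<in> {0..1}"
  shows "0 < mu1 n x"
proof -
  define h :: real where "h = 1 / 2^(n+1)"
  have h: "0 < h" "h \<le> 1/2"
    unfolding h_def by (auto simp: field_simps)
  have U: "U1 n x = {x - h ..< x + h} \<inter> {0..1}"
    unfolding U1_def h_def by simp
  obtain a b where ab: "a < b" "{a..b} \<subseteq> U1 n x"
  proof (cases "x \<le> 1/2")
    case True
    show ?thesis by (rule that[of x "x + h/2"]) (use h True assms in \<open>auto simp: U\<close>)
  next
    case False
    show ?thesis by (rule that[of "x - h/2" x]) (use h False assms in \<open>auto simp: U\<close>)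
  qed
  have "b - a = measure lborel {a..b}"
    using ab by (simp add: measure_def)
  also have "\<dots> \<le> mu1 n x"
    unfolding mu1_def by (rule measure_mono_fmeasurable[OF ab(2) _ fmeasurable_U1]) simp
  finally show ?thesis
    using ab by simp
qed

lemma lipschitz_average_dist_le:
  fixes u :: "real \<Rightarrow> real"
  assumes lip: "lipschitz_on L T u" and ST: "S \<subseteq> T" and x: "x \<in> T"
    and S: "S \<in> lmeasurable" "0 < measure lebesgue S" and int: "u integrable_on S"
    and near: "\<And>t. t \<in> S \<Longrightarrow> \<bar>t - x\<bar> \<le> h"
  shows "\<bar>integral S u / measure lebesgue S - u x\<bar> \<le> L * h"
proof -
  define m where "m = measure lebesgue S"
  have L0: "0 \<le> L"
    using lip by (simp add: lipschitz_on_def)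
  have const_int: "(\<lambda>t. c) integrable_on S" for c :: real
    using integrable_on_const[OF S(1)] .
  have integral_const: "integral S (\<lambda>t. c) = c * m" for c :: real
    using integral_mult_right[of S c "\<lambda>t. 1::real"] lmeasure_integral[OF S(1)]
    unfolding m_def by simp
  have "\<bar>u t - u x\<bar> \<le> L * h" if "t \<in> S" for t
  proof -
    have "\<bar>u t - u x\<bar> \<le> L * \<bar>t - x\<bar>"
      using lip that ST x unfolding lipschitz_on_def dist_real_def by blast
    also have "\<dots> \<le> L * h"
      using near[OF that] L0 by (rule mult_left_mono)
    finally show ?thesis .
  qed
  then have "norm (integral S (\<lambda>t. u t - u x)) \<le> integral S (\<lambda>t. L * h)"
    by (intro integral_norm_bound_integral integrable_diff int const_int) auto
  moreover have "integral S (\<lambda>t. u t - u x) = integral S u - u x * m"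
    using integral_diff[OF int const_int] integral_const by simp
  ultimately have "\<bar>integral S u - u x * m\<bar> \<le> L * h * m"
    using integral_const by (simp add: mult_ac)
  moreover have "integral S u / m - u x = (integral S u - u x * m) / m"
    using S(2) unfolding m_def by (simp add: field_simps)
  ultimately show ?thesis
    using S(2) unfolding m_def by (simp add: abs_divide pos_divide_le_eq)
qed

lemma avg1_dist_le:
  assumes lip: "lipschitz_on L {0..1} u" and x: "x \<in> {0..1}"
  shows "\<bar>avg1 n u x - u x\<bar> \<le> L / 2^(n+1)"
proof -
  have mu1_eq: "measure lebesgue (U1 n x) = mu1 n x"
    unfolding mu1_def using sets_lborel_U1 by (simp add: measure_completion)
  have "set_integrable lebesgue {0..1} u"
    using absolutely_integrable_continuous_real lipschitz_on_continuous_on[OF lip] by blast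
  then have "set_integrable lebesgue (U1 n x) u"
    by (rule set_integrable_subset) (use lmeasurable_U1 U1_subset_unit_interval in auto)
  then have "u integrable_on U1 n x"
    by (rule set_lebesgue_integral_eq_integral(1))
  moreover have "\<bar>t - x\<bar> \<le> 1 / 2^(n+1)" if "t \<in> U1 n x" for t
    using that U1_subset_closed_interval[of n x] by (auto simp: abs_le_iff)
  ultimately have "\<bar>integral (U1 n x) u / measure lebesgue (U1 n x) - u x\<bar> \<le> L * (1 / 2^(n+1))"
    using mu1_pos[OF x, of n]
    by (intro lipschitz_average_dist_le[OF lip U1_subset_unit_interval x lmeasurable_U1])
      (auto simp: mu1_eq)
  then show ?thesis
    unfolding avg1_def by (simp add: mu1_eq mu1_def)
qed

lemma abs_square_diff_le:
  fixes a b :: real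
  assumes a: "\<bar>a\<bar> \<le> L * d" and ba: "\<bar>b - a\<bar> \<le> e" and e: "e \<le> L * d"
  shows "\<bar>b\<^sup>2 - a\<^sup>2\<bar> \<le> 3 * L * d * e"
proof -
  have "\<bar>b\<^sup>2 - a\<^sup>2\<bar> = \<bar>b - a\<bar> * \<bar>b + a\<bar>"
    by (simp add: power2_eq_square abs_mult[symmetric] algebra_simps)
  also have "\<dots> \<le> e * (3 * L * d)"
  proof (rule mult_mono)
    show "\<bar>b + a\<bar> \<le> 3 * L * d"
      using a ba e by linarith
  qed (use ba in auto)
  finally show ?thesis
    by (simp add: mult_ac)
qed

lemma energy1_term_avg1_diff_le:
  fixes u :: "real \<Rightarrow> real"
  assumes lip: "lipschitz_on L {0..1} u" and s: "0 < s" "s < 1" and Lam: "0 \<le> Lam"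
    and j1: "0 < j1 r n x y" "j1 r n x y \<le> Lam * \<bar>x - y\<bar> powr (- 1 - 2 * s)"
    and xy: "x \<in> {0..1}" "y \<in> {0..1}" "1 / 2^n \<le> \<bar>x - y\<bar>"
  shows "\<bar>energy1_term r n (avg1 n u) x y - energy1_term r n u x y\<bar>
           \<le> 3 * L\<^sup>2 * Lam / (2^n)^3 * \<bar>x - y\<bar> powr (- 1 - s)"
proof -
  define d where "d = \<bar>x - y\<bar>"
  define N :: real where "N = 2^n"
  have N: "1 \<le> N"
    unfolding N_def by simp
  have d: "1 / N \<le> d" "d \<le> 1"
    using xy unfolding d_def N_def by auto
  have d0: "0 < d"
    using N(1) by (auto intro: less_le_trans[OF _ d(1)])
  have L0: "0 \<le> L"
    using lip by (simp add: lipschitz_on_def)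
  have lip_xy: "\<bar>u x - u y\<bar> \<le> L * d"
    using lip xy unfolding lipschitz_on_def dist_real_def d_def by blast
  have "\<bar>avg1 n u x - u x\<bar> \<le> L / (2 * N)" "\<bar>avg1 n u y - u y\<bar> \<le> L / (2 * N)"
    using avg1_dist_le[OF lip xy(1)] avg1_dist_le[OF lip xy(2)] unfolding N_def by simp_all
  then have avg_xy: "\<bar>(avg1 n u x - avg1 n u y) - (u x - u y)\<bar> \<le> L / N"
    by (simp add: field_simps)
  have "L / N \<le> L * d"
    using mult_left_mono[OF d(1) L0] by simp
  with lip_xy avg_xy have sq: "\<bar>(avg1 n u x - avg1 n u y)\<^sup>2 - (u x - u y)\<^sup>2\<bar> \<le> 3 * L * d * (L / N)"
    by (rule abs_square_diff_le)
  have kernel: "j1 r n x y * mu1 n x * mu1 n y \<le> Lam * d powr (- 1 - 2 * s) * (1 / N) * (1 / N)"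
    using j1 mu1_le[of n] mu1_nonneg[of n] Lam unfolding d_def N_def by (intro mult_mono) auto
  have "\<bar>energy1_term r n (avg1 n u) x y - energy1_term r n u x y\<bar>
      = \<bar>(avg1 n u x - avg1 n u y)\<^sup>2 - (u x - u y)\<^sup>2\<bar> * (j1 r n x y * mu1 n x * mu1 n y)"
  proof -
    have "energy1_term r n (avg1 n u) x y - energy1_term r n u x y
        = ((avg1 n u x - avg1 n u y)\<^sup>2 - (u x - u y)\<^sup>2) * (j1 r n x y * mu1 n x * mu1 n y)"
      unfolding energy1_term_def by (simp add: algebra_simps)
    then show ?thesis
      using j1(1) mu1_nonneg[of n] by (simp add: abs_mult)
  qed
  also have "\<dots> \<le> 3 * L * d * (L / N) * (Lam * d powr (- 1 - 2 * s) * (1 / N) * (1 / N))"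
    by (rule mult_mono[OF sq kernel]) (use L0 d0 N(1) j1(1) mu1_nonneg[of n] in auto)
  also have "\<dots> = 3 * L\<^sup>2 * Lam / N^3 * d powr (- 2 * s)"
    using d0 by (simp add: power2_eq_square power3_eq_cube powr_mult_base field_simps
      flip: powr_add)
  also have "\<dots> \<le> 3 * L\<^sup>2 * Lam / N^3 * d powr (- 1 - s)"
    \<comment> \<open>as \<open>d \<le> 1\<close>; this trades the non-summable exponent \<open>-2s\<close> for the summable \<open>-1-s\<close>\<close>
    using s d d0 Lam N by (intro mult_left_mono powr_mono') auto
  finally show ?thesis
    unfolding d_def N_def .
qed

lemma sum_nat_dist_le_two_suminf:
  fixes f :: "nat \<Rightarrow> real"
  assumes f: "summable f" "\<And>k. 0 \<le> f k"
  shows "(\<Sum>j\<in>{0..M}. f ((i - j) + (j - i))) \<le> 2 * suminf f"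
proof -
  have "(\<Sum>j\<in>{0..M}. f ((i - j) + (j - i))) \<le> (\<Sum>j\<in>{..i} \<union> {i<..M}. f ((i - j) + (j - i)))"
    by (rule sum_mono2) (auto simp: f)
  also have "\<dots> = (\<Sum>j\<in>{..i}. f (i - j)) + (\<Sum>j\<in>{i<..M}. f (j - i))"
    by (subst sum.union_disjoint) (auto intro!: arg_cong2[where f = "(+)"] sum.cong)
  also have "\<dots> = sum f ((\<lambda>j. i - j) ` {..i}) + sum f ((\<lambda>j. j - i) ` {i<..M})"
    by (subst (1 2) sum.reindex) (auto simp: inj_on_def)
  also have "\<dots> \<le> suminf f + suminf f"
    by (intro add_mono sum_le_suminf) (auto simp: f)
  finally show ?thesis
    by simp
qed

lemma energy1_eq_grid_sum:
  "energy1 r n w = (\<Sum>i\<in>{0..2^n}. \<Sum>j\<in>{0..2^n}. energy1_term r n w (real i / 2^n) (real j / 2^n))"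
proof -
  have "inj_on (\<lambda>k. real k / 2^n :: real) {0..2^n}"
    by (auto simp: inj_on_def)
  then show ?thesis
    unfolding energy1_def energy1_term_def V1_def by (simp add: sum.reindex)
qed

lemma energy1_term_avg1_diff_grid_le:
  fixes u :: "real \<Rightarrow> real"
  assumes lip: "lipschitz_on L {0..1} u" and s: "0 < s" "s < 1" and Lam: "0 \<le> Lam"
    and up: "\<And>x y. x \<in> V1 n \<Longrightarrow> y \<in> V1 n \<Longrightarrow> x \<noteq> y \<Longrightarrow>
               0 < j1 r n x y \<and> j1 r n x y \<le> Lam * \<bar>x - y\<bar> powr (- 1 - 2 * s)"
    and ij: "i \<le> 2^n" "j \<le> 2^n"
  shows "\<bar>energy1_term r n (avg1 n u) (real i / 2^n) (real j / 2^n)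
            - energy1_term r n u (real i / 2^n) (real j / 2^n)\<bar>
           \<le> 3 * L\<^sup>2 * Lam * (2^n) powr (s - 2) * real ((i - j) + (j - i)) powr (- 1 - s)"
proof (cases "i = j")
  case True
  then show ?thesis
    by (simp add: energy1_term_def)
next
  case False
  define N :: real where "N = 2^n"
  define x where "x = real i / N"
  define y where "y = real j / N"
  define k where "k = (i - j) + (j - i)"
  have N: "1 \<le> N" "(2^n)^3 = N powr 3"
    unfolding N_def by (simp_all add: powr_numeral)
  have k: "1 \<le> k" "k \<le> 2^n"
    using False ij unfolding k_def by auto
  then have "real k \<le> N"
    unfolding N_def by (metis of_nat_le_iff of_nat_numeral of_nat_power)
  have dist: "\<bar>x - y\<bar> = real k / N"
    unfolding x_def y_def k_def using N by (cases "i \<le> j") (auto simp: field_simps abs_if of_nat_diff)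
  have grid: "x \<in> V1 n" "y \<in> V1 n" "x \<noteq> y" "x \<in> {0..1}" "y \<in> {0..1}"
    using ij False N unfolding x_def y_def N_def V1_def by (auto simp: field_simps)
  have "\<bar>energy1_term r n (avg1 n u) x y - energy1_term r n u x y\<bar>
      \<le> 3 * L\<^sup>2 * Lam / (2^n)^3 * (real k / N) powr (- 1 - s)"
    unfolding dist[symmetric]
    by (rule energy1_term_avg1_diff_le[OF lip s Lam])
      (use up[OF grid(1-3)] grid(4,5) k N in \<open>auto simp: dist N_def field_simps\<close>)
  also have "\<dots> = 3 * L\<^sup>2 * Lam * (N powr (1 + s) / N powr 3) * real k powr (- 1 - s)"
    unfolding N(2) using N powr_minus_divide[of N "1 + s"] by (simp add: powr_divide)
  also have "\<dots> = 3 * L\<^sup>2 * Lam * N powr (s - 2) * real k powr (- 1 - s)"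
    using powr_diff[of N "1 + s" 3] by simp
  finally show ?thesis
    unfolding x_def y_def k_def N_def .
qed

lemma energy1_avg1_diff_le:
  fixes u :: "real \<Rightarrow> real"
  assumes lip: "lipschitz_on L {0..1} u" and s: "0 < s" "s < 1" and Lam: "0 \<le> Lam"
    and up: "\<And>x y. x \<in> V1 n \<Longrightarrow> y \<in> V1 n \<Longrightarrow> x \<noteq> y \<Longrightarrow>
               0 < j1 r n x y \<and> j1 r n x y \<le> Lam * \<bar>x - y\<bar> powr (- 1 - 2 * s)"
  shows "\<bar>energy1 r n (avg1 n u) - energy1 r n u\<bar>
           \<le> 12 * L\<^sup>2 * Lam * (\<Sum>k. real k powr (- 1 - s)) * (2^n) powr (s - 1)"
proof -
  define N :: real where "N = 2^n"
  define f where "f k = real k powr (- 1 - s)" for k :: nat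
  define C where "C = 3 * L\<^sup>2 * Lam * N powr (s - 2)"
  define T where "T i j = energy1_term r n (avg1 n u) (real i / N) (real j / N)
                            - energy1_term r n u (real i / N) (real j / N)" for i j
  have N: "1 \<le> N"
    unfolding N_def by simp
  have f: "summable f" "\<And>k. 0 \<le> f k"
    unfolding f_def using summable_real_powr_iff[of "- 1 - s"] s by simp_all
  have C: "0 \<le> C"
    unfolding C_def using Lam by simp
  have "\<bar>energy1 r n (avg1 n u) - energy1 r n u\<bar> = \<bar>\<Sum>i\<in>{0..2^n}. \<Sum>j\<in>{0..2^n}. T i j\<bar>"
    unfolding energy1_eq_grid_sum T_def N_def by (simp add: sum_subtractf)
  also have "\<dots> \<le> (\<Sum>i\<in>{0..2^n}. \<Sum>j\<in>{0..2^n}. C * f ((i - j) + (j - i)))"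
    using energy1_term_avg1_diff_grid_le[OF lip s Lam up]
    by (intro order_trans[OF sum_abs] sum_mono order_trans[OF sum_abs])
      (auto simp: T_def C_def f_def N_def)
  also have "\<dots> \<le> (\<Sum>i\<in>{0..(2::nat)^n}. C * (2 * suminf f))"
    by (intro sum_mono)
      (simp add: C sum_distrib_left[symmetric] mult_left_mono sum_nat_dist_le_two_suminf[OF f])
  also have "\<dots> = (N + 1) * C * 2 * suminf f"
    unfolding N_def by simp
  also have "\<dots> \<le> 2 * N * C * 2 * suminf f"
    using N C suminf_nonneg[OF f] by (intro mult_right_mono) auto
  also have "\<dots> = 12 * L\<^sup>2 * Lam * suminf f * N powr (s - 1)"
    using N unfolding C_def by (simp add: powr_diff power2_eq_square field_simps)
  finally show ?thesis
    unfolding f_def N_def .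
qed

lemma energy1_avg1_diff_tendsto_zero:
  fixes u :: "real \<Rightarrow> real"
  assumes lip: "lipschitz_on L {0..1} u" and s: "0 < s" "s < 1" and Lam: "0 \<le> Lam"
    and up: "\<And>n x y. x \<in> V1 n \<Longrightarrow> y \<in> V1 n \<Longrightarrow> x \<noteq> y \<Longrightarrow>
               0 < j1 r n x y \<and> j1 r n x y \<le> Lam * \<bar>x - y\<bar> powr (- 1 - 2 * s)"
  shows "(\<lambda>n. energy1 r n (avg1 n u) - energy1 r n u) \<longlonglongrightarrow> 0"
proof (rule Lim_null_comparison)
  define K where "K = 12 * L\<^sup>2 * Lam * (\<Sum>k. real k powr (- 1 - s))"
  have "((2::real)^n) powr (s - 1) = (2 powr (s - 1))^n" for n
  proof -
    have "((2::real)^n) powr (s - 1) = 2 powr (real n * (s - 1))"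
      by (simp add: powr_powr flip: powr_realpow)
    also have "\<dots> = (2 powr (s - 1))^n"
      by (simp add: powr_power)
    finally show ?thesis .
  qed
  then show "\<forall>\<^sub>F n in sequentially. norm (energy1 r n (avg1 n u) - energy1 r n u) \<le> K * (2 powr (s - 1))^n"
    using energy1_avg1_diff_le[OF lip s Lam up] unfolding K_def by simp
  show "(\<lambda>n. K * (2 powr (s - 1))^n) \<longlonglongrightarrow> 0"
    using s by (intro tendsto_mult_right_zero LIMSEQ_power_zero) (auto intro: powr_less_one)
qed

theorem lemma4p14:
  fixes r :: "nat \<Rightarrow> nat \<Rightarrow> real" and s :: real and u :: "real \<Rightarrow> real"
  assumes r_pos: "\<And>i k. i \<ge> 1 \<Longrightarrow> edge_ok i k \<Longrightarrow> r i k > 0"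
    and r_sym: "\<And>i. r i 1 = r i 2"
    and s_range: "0 < s" "s < 1"
    and upper: "\<exists>Lam>0. \<forall>n x y. x \<in> V1 n \<longrightarrow> y \<in> V1 n \<longrightarrow> x \<noteq> y \<longrightarrow>
                   0 < j1 r n x y \<and> j1 r n x y \<le> Lam * (abs (x - y) powr (- 1 - 2 * s))"
    and lip: "\<exists>L. lipschitz_on L {0..1} u"
  shows "\<forall>l::real. ((\<lambda>n. energy1 r n (avg1 n u)) \<longlonglongrightarrow> l) \<longleftrightarrow> ((\<lambda>n. energy1 r n u) \<longlonglongrightarrow> l)"
proof -
  obtain Lam where "Lam > 0" and up: "\<And>n x y. x \<in> V1 n \<Longrightarrow> y \<in> V1 n \<Longrightarrow> x \<noteq> y \<Longrightarrow>
      0 < j1 r n x y \<and> j1 r n x y \<le> Lam * \<bar>x - y\<bar> powr (- 1 - 2 * s)"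
    using upper by blast
  obtain L where L: "lipschitz_on L {0..1} u"
    using lip by blast
  \<comment> \<open>Only the upper bound on the kernel matters.\<close>
  have diff: "(\<lambda>n. energy1 r n (avg1 n u) - energy1 r n u) \<longlonglongrightarrow> 0"
    using \<open>Lam > 0\<close> energy1_avg1_diff_tendsto_zero[OF L s_range _ up] by simp
  then have diff': "(\<lambda>n. energy1 r n u - energy1 r n (avg1 n u)) \<longlonglongrightarrow> 0"
    using tendsto_minus[OF diff] by simp
  show ?thesis
    using Lim_transform[OF _ diff] Lim_transform[OF _ diff'] by blast
qed

end
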